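(* Let $U$ satisfy the standing assumption below with constant $c$. Let $N\ge2$, and let $p$ be a program of length $N$ which has not stopped on $U$ by time $2^{2N+2c+1}$. Then $U(p)$ does not stop exactly at any algorithmically random time $t\ge2^{2N+2c+1}$. That is, if $t_p<\infty$, then $t_p$ is not algorithmically random.
   Context: Strings are binary and $|x|$ is the length of $x$. $\mathrm{bin}:\{1,2,\dots\}\to\Sigma^*$ sends $n$ to its binary expansion with the leading $1$ removed. $U$ is a fixed universal Turing machine, and $\nabla(x)=\min\{n\ge1:U(\mathrm{bin}(n))=x\}$ is the natural complexity of $x$. $t_p$ is the exact step at which $U(p)$ halts, with $t_p=\infty$ if it never halts. A nonempty string $x$ is algorithmically random if $\nabla(x)\ge2^{|x|}/|x|$. A time $t\ge2$ is algorithmically random if $\mathrm{bin}(t)$ is algorithmically random. Standing assumption: there is a computable transformation $p\mapsto time(p)$ and a positive integer constant $c$ such that, for every program $p$: (i) $U(p)$ halts if and only if $U(time(p))$ halts; (ii) $|time(p)|\le|p|+c$; (iii) if $U(p)$ halts, then $U(time(p))=\mathrm{bin}(t_p)$. *)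

theory Defs
  imports Complex_Main
begin

text \<open>Binary strings are bool lists. bin n is the binary expansion of n with the
  leading 1 removed (bin 1 = []); bin 0 is unused and set to [].\<close>
fun bin :: "nat \<Rightarrow> bool list" where
  "bin n = (if n \<le> 1 then [] else bin (n div 2) @ [odd n])"

text \<open>The machine U is modelled abstractly by its output function
  out :: program \<Rightarrow> output option (None = does not halt) and its
  exact halting time function ht (None = never halts, i.e. t_p = infinity).\<close>

definition nabla :: "(bool list \<Rightarrow> bool list option) \<Rightarrow> bool list \<Rightarrow> nat" where
  "nabla out x = (LEAST n. n \<ge> 1 \<and> out (bin n) = Some x)"

definition alg_random :: "(bool list \<Rightarrow> bool list option) \<Rightarrow> bool list \<Rightarrow> bool" where
  "alg_random out x \<longleftrightarrow> x \<noteq> [] \<and>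
     real (nabla out x) \<ge> 2 ^ length x / real (length x)"

definition alg_random_time :: "(bool list \<Rightarrow> bool list option) \<Rightarrow> nat \<Rightarrow> bool" where
  "alg_random_time out t \<longleftrightarrow> t \<ge> 2 \<and> alg_random out (bin t)"

definition time_assumption ::
  "(bool list \<Rightarrow> bool list option) \<Rightarrow> (bool list \<Rightarrow> nat option) \<Rightarrow>
   (bool list \<Rightarrow> bool list) \<Rightarrow> nat \<Rightarrow> bool" where
  "time_assumption out ht time c \<longleftrightarrow> c > 0 \<and>
     (\<forall>p. (out p \<noteq> None \<longleftrightarrow> out (time p) \<noteq> None)
        \<and> length (time p) \<le> length p + c
        \<and> (\<forall>t. ht p = Some t \<longrightarrow> out (time p) = Some (bin t)))"

end

theory Submission
  imports Defs
begin

text \<open>If U(p) halts at time t, then time(p) is a program of length at most N + c printing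
  bin t, so the natural complexity of bin t is below 2^(N+c+1). When t \<ge> 2^(2N+2c+1),
  bin t has length L \<ge> 2(N+c) + 1, and then 2^L / L \<ge> 2^(N+c+1): bin t is too simple
  to be algorithmically random.\<close>

declare bin.simps [simp del]

lemma bin_gt_one: "n > 1 \<Longrightarrow> bin n = bin (n div 2) @ [odd n]"
  by (subst bin.simps) simp

lemma less_two_power_length_bin: "t < 2 ^ (length (bin t) + 1)"
proof (induction t rule: bin.induct)
  case (1 t)
  show ?case
  proof (cases "t \<le> 1")
    case True
    then show ?thesis
      by (simp add: bin.simps)
  next
    case False
    then have "t div 2 < 2 ^ (length (bin (t div 2)) + 1)"
      using 1 by simp
    then show ?thesis
      using False by (simp add: bin_gt_one)
  qed
qed

lemma le_length_bin_if_two_power_le: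
  assumes "2 ^ m \<le> t"
  shows "m \<le> length (bin t)"
proof -
  have "(2::nat) ^ m < 2 ^ (length (bin t) + 1)"
    using assms less_two_power_length_bin[of t] by linarith
  then show ?thesis
    using power_less_imp_less_exp[of "2::nat" m "length (bin t) + 1"] by simp
qed

definition bin_index :: "bool list \<Rightarrow> nat" where
  "bin_index q = foldl (\<lambda>n b. 2 * n + of_bool b) 1 q"

lemma bin_index_pos: "bin_index q \<ge> 1"
  unfolding bin_index_def by (induction q rule: rev_induct) auto

lemma bin_index_less: "bin_index q < 2 ^ (length q + 1)"
  unfolding bin_index_def by (induction q rule: rev_induct) auto

lemma bin_bin_index: "bin (bin_index q) = q"
proof (induction q rule: rev_induct)
  case Nil
  then show ?case
    by (simp add: bin_index_def bin.simps)
next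
  case (snoc b q)
  have "bin_index (q @ [b]) = 2 * bin_index q + of_bool b"
    by (simp add: bin_index_def)
  moreover have "bin_index q \<ge> 1"
    by (rule bin_index_pos)
  ultimately show ?case
    using snoc by (simp add: bin_gt_one)
qed

lemma nabla_le:
  assumes "n \<ge> 1" and "out (bin n) = Some x"
  shows "nabla out x \<le> n"
  unfolding nabla_def using assms by (intro Least_le) simp

lemma nabla_less_if_output:
  assumes "out q = Some x"
  shows "nabla out x < 2 ^ (length q + 1)"
  using nabla_le[where n = "bin_index q" and out = out and x = x] assms
    bin_index_pos bin_index_less[of q]
  by (simp add: bin_bin_index)

lemma two_power_mult_le_two_power:
  fixes k L :: nat
  assumes "k \<ge> 4" and "2 * k \<le> L + 1"
  shows "2 ^ k * L \<le> 2 ^ L"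
proof -
  define j where "j = L - k"
  have "j \<ge> 3" and L_eq: "L = k + j" and "L \<le> 2 * j + 1"
    using assms unfolding j_def by auto
  have "2 * j + 1 \<le> (2::nat) ^ j"
    using \<open>j \<ge> 3\<close> by (induction j rule: nat_induct_at_least) auto
  then have "2 ^ k * L \<le> 2 ^ k * 2 ^ j"
    using \<open>L \<le> 2 * j + 1\<close> by simp
  then show ?thesis
    by (simp add: L_eq power_add)
qed

lemma not_alg_random_if_nabla_less:
  assumes "nabla out x < 2 ^ k" and "k \<ge> 4" and "2 * k \<le> length x + 1"
  shows "\<not> alg_random out x"
proof
  assume "alg_random out x"
  then have "length x > 0" and "2 ^ length x / length x \<le> real (nabla out x)"
    unfolding alg_random_def by auto
  then have "2 ^ length x \<le> real (nabla out x * length x)"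
    by (simp add: pos_divide_le_eq)
  moreover have "nabla out x * length x < 2 ^ k * length x"
    using assms(1) \<open>length x > 0\<close> by simp
  with two_power_mult_le_two_power[OF assms(2,3)]
  have "nabla out x * length x < 2 ^ length x"
    by linarith
  then have "real (nabla out x * length x) < 2 ^ length x"
    by (metis of_nat_less_iff of_nat_numeral of_nat_power)
  ultimately show False
    by simp
qed

theorem mainTheorem6:
  fixes out :: "bool list \<Rightarrow> bool list option"
    and ht :: "bool list \<Rightarrow> nat option"
    and time :: "bool list \<Rightarrow> bool list"
    and c N :: nat and p :: "bool list"
  assumes halt_consistent: "\<And>q. ht q = None \<longleftrightarrow> out q = None"
    and std: "time_assumption out ht time c"
    and N2: "N \<ge> 2"
    and len: "length p = N"
    and not_stopped: "\<And>t. ht p = Some t \<Longrightarrow> t > 2 ^ (2 * N + 2 * c + 1)"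
  shows "\<forall>t. t \<ge> 2 ^ (2 * N + 2 * c + 1) \<and> alg_random_time out t \<longrightarrow> ht p \<noteq> Some t"
proof (intro allI impI notI)
  fix t
  assume t: "t \<ge> 2 ^ (2 * N + 2 * c + 1) \<and> alg_random_time out t" and halts: "ht p = Some t"
  have "c > 0" and "length (time p) \<le> N + c" and "out (time p) = Some (bin t)"
    using std halts len unfolding time_assumption_def by auto
  then have "nabla out (bin t) < 2 ^ (length (time p) + 1)"
    by (intro nabla_less_if_output)
  also have "\<dots> \<le> 2 ^ (N + c + 1)"
    using \<open>length (time p) \<le> N + c\<close> by (intro power_increasing) auto
  finally have "nabla out (bin t) < 2 ^ (N + c + 1)" .
  moreover have "2 * N + 2 * c + 1 \<le> length (bin t)"
    using t le_length_bin_if_two_power_le by blast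
  ultimately have "\<not> alg_random out (bin t)"
    using N2 \<open>c > 0\<close> by (intro not_alg_random_if_nabla_less[where k = "N + c + 1"]) auto
  then show False
    using t unfolding alg_random_time_def by blast
qed

end
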